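(* For every $m\ge0$, substituting $\lambda_i=q^{-2(i-1)}$, $i=1,\dots,n$, into $\vartheta_m(q^{-2},\lambda)$ gives $\hat n$.
   Context: $\hat m=\frac{1-q^{-2m}}{1-q^{-2}}$. For indeterminates $\lambda=(\lambda_1,\dots,\lambda_n)$ and $m\ge1$, $\vartheta_m(q^{-2},\lambda)=\sum_{\ell=1}^n(1-q^{-2})^{\ell-1}\sum_{\mathbf d}\sum_{1\le j_1<\dots<j_\ell\le n}\lambda_{j_1}^{d_1}\cdots\lambda_{j_\ell}^{d_\ell}$, where $\mathbf d=(d_1,\dots,d_\ell)$ runs over $\ell$-tuples of positive integers with sum $m$; $\vartheta_0(q^{-2},\lambda)=\hat n$. *)

theory Defs
  imports Main
begin

definition qhat :: "'a::field \<Rightarrow> nat \<Rightarrow> 'a" where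
  "qhat q m = (1 - inverse q ^ (2 * m)) / (1 - inverse q ^ 2)"

definition compositions :: "nat \<Rightarrow> nat \<Rightarrow> nat list set" where
  "compositions l m = {d. length d = l \<and> (\<forall>x\<in>set d. 0 < x) \<and> sum_list d = m}"

definition incr_tuples :: "nat \<Rightarrow> nat \<Rightarrow> nat list set" where
  "incr_tuples l n = {js. length js = l \<and> sorted_wrt (<) js \<and> set js \<subseteq> {1..n}}"

text \<open>theta t m n lam = vartheta_m(t, lambda) with lambda = (lam 1, ..., lam n);
  vartheta_0(q^{-2}, lambda) = hat n, i.e. (1 - t^n)/(1 - t) with t = q^{-2}.\<close>
definition theta :: "'a::field \<Rightarrow> nat \<Rightarrow> nat \<Rightarrow> (nat \<Rightarrow> 'a) \<Rightarrow> 'a" where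
  "theta t m n lam =
     (if m = 0 then (1 - t ^ n) / (1 - t)
      else (\<Sum>l = 1..n. (1 - t) ^ (l - 1) *
              (\<Sum>d \<in> compositions l m. \<Sum>js \<in> incr_tuples l n.
                  \<Prod>i<l. lam (js ! i) ^ (d ! i))))"

end

theory Submission
  imports Defs
begin

text \<open>
  Write t = q^-2 and S_n(m) = (\<Sum>l=0..n. (1 - t)^l W_l(m)) (scaled_theta), where W_l(m)
  (composition_sum) is the inner double sum of \<vartheta>_m; thus S_n(m) = (1 - t) \<vartheta>_m
  for m > 0, and S_n(0) = 1.
  As a generating function, S_n = \<Prod>i=1..n. (1 - t \<lambda>_i z) / (1 - \<lambda>_i z), which for
  \<lambda>_i = t^(i-1) telescopes to (1 - t^n z) / (1 - z); so S_n(m) = 1 - t^n for all m > 0.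
  We use only the coefficient form of the last factor: sorting the index tuples by whether
  they end with n + 1 gives S_(n+1)(m) = S_n(m) + (1 - t) (\<Sum>k=1..m. \<lambda>_(n+1)^k S_n(m - k)),
  and the closed form follows by induction on n.
\<close>

definition composition_sum :: "(nat \<Rightarrow> 'a::comm_semiring_1) \<Rightarrow> nat \<Rightarrow> nat \<Rightarrow> nat \<Rightarrow> 'a" where
  "composition_sum lam l n m = (\<Sum>d \<in> compositions l m. \<Sum>js \<in> incr_tuples l n.
                                  \<Prod>i<l. lam (js ! i) ^ (d ! i))"

definition scaled_theta :: "(nat \<Rightarrow> 'a::comm_ring_1) \<Rightarrow> 'a \<Rightarrow> nat \<Rightarrow> nat \<Rightarrow> 'a" where
  "scaled_theta lam t n m = (\<Sum>l\<le>n. (1 - t) ^ l * composition_sum lam l n m)"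

lemma finite_incr_tuples: "finite (incr_tuples l n)"
proof -
  have "incr_tuples l n \<subseteq> {xs. set xs \<subseteq> {1..n} \<and> length xs = l}"
    unfolding incr_tuples_def by auto
  then show ?thesis using finite_lists_length_eq[of "{1..n}" l] finite_subset by blast
qed

lemma finite_compositions: "finite (compositions l m)"
proof -
  have "compositions l m \<subseteq> {xs. set xs \<subseteq> {0..m} \<and> length xs = l}"
    unfolding compositions_def using member_le_sum_list by fastforce
  then show ?thesis using finite_lists_length_eq[of "{0..m}" l] finite_subset by blast
qed

lemma incr_tuples_eq_empty_if_less:
  assumes "n < l"
  shows "incr_tuples l n = {}"
proof (rule ccontr)
  assume "incr_tuples l n \<noteq> {}"
  then obtain js where js: "length js = l" "sorted_wrt (<) js" "set js \<subseteq> {1..n}"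
    unfolding incr_tuples_def by auto
  then have "l = card (set js)"
    by (simp add: distinct_card strict_sorted_iff)
  also have "\<dots> \<le> n"
    using card_mono[OF _ js(3)] by simp
  finally show False using assms by simp
qed

lemma incr_tuples_Suc_Suc:
  "incr_tuples (Suc l) (Suc n) = incr_tuples (Suc l) n \<union> (\<lambda>js. js @ [Suc n]) ` incr_tuples l n"
proof
  show "incr_tuples (Suc l) (Suc n) \<subseteq> incr_tuples (Suc l) n \<union> (\<lambda>js. js @ [Suc n]) ` incr_tuples l n"
  proof
    fix js assume js: "js \<in> incr_tuples (Suc l) (Suc n)"
    show "js \<in> incr_tuples (Suc l) n \<union> (\<lambda>js. js @ [Suc n]) ` incr_tuples l n"
    proof (cases "Suc n \<in> set js")
      case False
      have "set js \<subseteq> {1..Suc n}"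
        using js unfolding incr_tuples_def by auto
      with False have "set js \<subseteq> {1..n}"
        by (simp add: atLeastAtMostSuc_conv subset_insert)
      then show ?thesis using js unfolding incr_tuples_def by auto
    next
      case True
      from js obtain ys y where js_eq: "js = ys @ [y]"
        unfolding incr_tuples_def by (cases js rule: rev_cases) auto
      with js have ys: "sorted_wrt (<) ys" "\<forall>x\<in>set ys. x < y" "y \<le> Suc n"
          "set ys \<subseteq> {1..Suc n}" "length ys = l"
        unfolding incr_tuples_def by (auto simp: sorted_wrt_append)
      with True js_eq have "y = Suc n" by auto
      with ys have "ys \<in> incr_tuples l n"
        unfolding incr_tuples_def by fastforce
      with js_eq \<open>y = Suc n\<close> show ?thesis by auto
    qed
  qed
next
  show "incr_tuples (Suc l) n \<union> (\<lambda>js. js @ [Suc n]) ` incr_tuples l n \<subseteq> incr_tuples (Suc l) (Suc n)"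
    unfolding incr_tuples_def by (auto simp: sorted_wrt_append subset_iff less_Suc_eq_le)
qed

lemma compositions_Suc:
  "compositions (Suc l) m = (\<lambda>(k, d). d @ [k]) ` (SIGMA k:{1..m}. compositions l (m - k))"
proof
  show "compositions (Suc l) m \<subseteq> (\<lambda>(k, d). d @ [k]) ` (SIGMA k:{1..m}. compositions l (m - k))"
  proof
    fix d assume d: "d \<in> compositions (Suc l) m"
    then obtain ys y where d_eq: "d = ys @ [y]"
      unfolding compositions_def by (cases d rule: rev_cases) auto
    with d have "y \<in> {1..m}" "ys \<in> compositions l (m - y)"
      unfolding compositions_def by auto
    with d_eq show "d \<in> (\<lambda>(k, d). d @ [k]) ` (SIGMA k:{1..m}. compositions l (m - k))"
      by force
  qed
next
  show "(\<lambda>(k, d). d @ [k]) ` (SIGMA k:{1..m}. compositions l (m - k)) \<subseteq> compositions (Suc l) m"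
    unfolding compositions_def by auto
qed

lemma composition_sum_0: "composition_sum lam 0 n m = (if m = 0 then 1 else 0)"
proof -
  have "compositions 0 m = (if m = 0 then {[]} else {})"
    unfolding compositions_def by auto
  moreover have "incr_tuples 0 n = {[]}"
    unfolding incr_tuples_def by auto
  ultimately show ?thesis
    unfolding composition_sum_def by simp
qed

lemma composition_sum_eq_0_if_less: "n < l \<Longrightarrow> composition_sum lam l n m = 0"
  by (simp add: composition_sum_def incr_tuples_eq_empty_if_less)

lemma prod_power_snoc:
  fixes lam :: "nat \<Rightarrow> 'a::comm_monoid_mult"
  assumes len: "length d = l" "length js = l"
  shows "(\<Prod>i<Suc l. lam ((js @ [j]) ! i) ^ ((d @ [k]) ! i))
           = lam j ^ k * (\<Prod>i<l. lam (js ! i) ^ (d ! i))"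
proof -
  from len have "(\<Prod>i<l. lam ((js @ [j]) ! i) ^ ((d @ [k]) ! i)) = (\<Prod>i<l. lam (js ! i) ^ (d ! i))"
    by (intro prod.cong) (auto simp: nth_append)
  then show ?thesis
    using len by (simp add: nth_append) (rule mult.commute)
qed

lemma composition_sum_Suc_Suc:
  fixes lam :: "nat \<Rightarrow> 'a::comm_semiring_1"
  shows "composition_sum lam (Suc l) (Suc n) m = composition_sum lam (Suc l) n m
           + (\<Sum>k=1..m. lam (Suc n) ^ k * composition_sum lam l n (m - k))"
proof -
  let ?I = "incr_tuples l n" and ?C = "\<lambda>k. compositions l (m - k)"
  let ?F = "\<lambda>d js. \<Prod>i<Suc l. lam (js ! i) ^ (d ! i)"
  have disjoint: "incr_tuples (Suc l) n \<inter> (\<lambda>js. js @ [Suc n]) ` ?I = {}"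
    unfolding incr_tuples_def by auto
  have inj_snoc: "inj_on (\<lambda>js. js @ [j]) A" "inj_on (\<lambda>(k, d). d @ [k]) B"
    for j :: nat and A :: "nat list set" and B :: "(nat \<times> nat list) set"
    by (auto simp: inj_on_def)
  have "composition_sum lam (Suc l) (Suc n) m = (\<Sum>d \<in> compositions (Suc l) m.
          (\<Sum>js\<in>incr_tuples (Suc l) n. ?F d js) + (\<Sum>js\<in>?I. ?F d (js @ [Suc n])))"
    unfolding composition_sum_def incr_tuples_Suc_Suc
    by (simp add: sum.union_disjoint[OF finite_incr_tuples finite_imageI[OF finite_incr_tuples]
          disjoint] sum.reindex[OF inj_snoc(1)])
  also have "\<dots> = composition_sum lam (Suc l) n m
          + (\<Sum>d \<in> compositions (Suc l) m. \<Sum>js\<in>?I. ?F d (js @ [Suc n]))"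
    unfolding composition_sum_def sum.distrib ..
  also have "(\<Sum>d \<in> compositions (Suc l) m. \<Sum>js\<in>?I. ?F d (js @ [Suc n]))
      = (\<Sum>(k, d) \<in> (SIGMA k:{1..m}. ?C k). \<Sum>js\<in>?I. ?F (d @ [k]) (js @ [Suc n]))"
    unfolding compositions_Suc sum.reindex[OF inj_snoc(2)] by (simp add: case_prod_beta)
  also have "\<dots> = (\<Sum>k=1..m. \<Sum>d\<in>?C k. \<Sum>js\<in>?I. ?F (d @ [k]) (js @ [Suc n]))"
    by (subst sum.Sigma[symmetric]) (auto simp: finite_compositions)
  also have "\<dots> = (\<Sum>k=1..m. \<Sum>d\<in>?C k. \<Sum>js\<in>?I. lam (Suc n) ^ k * (\<Prod>i<l. lam (js ! i) ^ (d ! i)))"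
    by (intro sum.cong refl prod_power_snoc) (auto simp: compositions_def incr_tuples_def)
  also have "\<dots> = (\<Sum>k=1..m. lam (Suc n) ^ k * composition_sum lam l n (m - k))"
    unfolding composition_sum_def by (simp add: sum_distrib_left)
  finally show ?thesis .
qed

lemma scaled_theta_Suc:
  "scaled_theta lam t (Suc n) m = scaled_theta lam t n m
     + (1 - t) * (\<Sum>k=1..m. lam (Suc n) ^ k * scaled_theta lam t n (m - k))"
proof -
  let ?c = "composition_sum lam"
  have shift: "scaled_theta lam t n m = ?c 0 n m + (\<Sum>l\<le>n. (1 - t) ^ Suc l * ?c (Suc l) n m)"
  proof -
    have "scaled_theta lam t n m = (\<Sum>l\<le>Suc n. (1 - t) ^ l * ?c l n m)"
      unfolding scaled_theta_def by (simp add: composition_sum_eq_0_if_less)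
    then show ?thesis
      by (simp add: sum.atMost_Suc_shift del: sum.atMost_Suc)
  qed
  have "scaled_theta lam t (Suc n) m
      = ?c 0 (Suc n) m + (\<Sum>l\<le>n. (1 - t) ^ Suc l * ?c (Suc l) (Suc n) m)"
    unfolding scaled_theta_def by (subst sum.atMost_Suc_shift) simp
  also have "\<dots> = scaled_theta lam t n m
      + (\<Sum>l\<le>n. (1 - t) ^ Suc l * (\<Sum>k=1..m. lam (Suc n) ^ k * ?c l n (m - k)))"
    by (simp add: shift composition_sum_Suc_Suc composition_sum_0 distrib_left sum.distrib)
  also have "(\<Sum>l\<le>n. (1 - t) ^ Suc l * (\<Sum>k=1..m. lam (Suc n) ^ k * ?c l n (m - k)))
      = (1 - t) * (\<Sum>k=1..m. lam (Suc n) ^ k * scaled_theta lam t n (m - k))"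
    unfolding scaled_theta_def by (simp add: sum_distrib_left mult_ac sum.swap[of _ "{..n}"])
  finally show ?thesis .
qed

lemma sum_power_mult_one_minus: "(\<Sum>k=1..j. u ^ k * (1 - u)) = u - u ^ Suc j"
  for u :: "'a::comm_ring_1"
  by (induction j) (auto simp: algebra_simps)

lemma scaled_theta_geometric:
  fixes t :: "'a::comm_ring_1"
  assumes lam: "\<And>i. lam (Suc i) = t ^ i"
  shows "scaled_theta lam t n m = (if m = 0 then 1 else 1 - t ^ n)"
proof (induction n arbitrary: m)
  case 0
  show ?case
    by (simp add: scaled_theta_def composition_sum_0)
next
  case (Suc n)
  let ?S = "scaled_theta lam t"
  show ?case
  proof (cases m)
    case 0
    then show ?thesis
      by (simp add: scaled_theta_Suc Suc.IH)
  next
    case m: (Suc j)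
    have "(\<Sum>k=1..m. (t ^ n) ^ k * ?S n (m - k))
        = (\<Sum>k=1..m. (t ^ n) ^ k * (if m - k = 0 then 1 else 1 - t ^ n))"
      by (simp add: Suc.IH)
    also have "\<dots> = (\<Sum>k=1..j. (t ^ n) ^ k * (1 - t ^ n)) + (t ^ n) ^ Suc j"
      by (simp add: m sum.atLeast1_atMost_eq)
    also have "\<dots> = t ^ n"
      using sum_power_mult_one_minus[of "t ^ n" j] by simp
    finally have "(\<Sum>k=1..m. (t ^ n) ^ k * ?S n (m - k)) = t ^ n" .
    then show ?thesis
      by (simp add: scaled_theta_Suc Suc.IH m lam algebra_simps)
  qed
qed

lemma theta_eq_scaled_theta:
  assumes "m > 0"
  shows "(1 - t) * theta t m n lam = scaled_theta lam t n m"
proof -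
  have "(1 - t) * theta t m n lam
      = (1 - t) * (\<Sum>l=1..n. (1 - t) ^ (l - 1) * composition_sum lam l n m)"
    using assms by (simp add: theta_def composition_sum_def)
  also have "\<dots> = (\<Sum>l=1..n. (1 - t) ^ l * composition_sum lam l n m)"
    unfolding sum_distrib_left
    by (intro sum.cong refl) (auto simp: mult.assoc[symmetric] power_Suc[symmetric])
  also have "\<dots> = scaled_theta lam t n m"
    using assms unfolding scaled_theta_def
    by (simp add: atMost_atLeast0 sum.atLeast_Suc_atMost composition_sum_0 Suc_le_eq
        flip: One_nat_def)
  finally show ?thesis .
qed

theorem lemma4p4:
  fixes q :: "'a::field" and m n :: nat
  assumes "q \<noteq> 0" and "q ^ 2 \<noteq> 1"
  shows "theta (inverse q ^ 2) m n (\<lambda>i. inverse q ^ (2 * (i - 1))) = qhat q n"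
proof -
  define t where "t = inverse q ^ 2"
  define lam where "lam = (\<lambda>i::nat. t ^ (i - 1))"
  have "1 - t \<noteq> 0"
    using assms by (simp add: t_def power_inverse)
  moreover have "m > 0 \<Longrightarrow> (1 - t) * theta t m n lam = 1 - t ^ n"
    by (simp add: theta_eq_scaled_theta scaled_theta_geometric lam_def)
  ultimately have "theta t m n lam = (1 - t ^ n) / (1 - t)"
    by (cases "m = 0") (simp_all add: theta_def eq_divide_eq mult.commute)
  then show ?thesis
    by (simp add: lam_def qhat_def t_def power_mult)
qed

end
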